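(* Let $G$ be a graph, $e=\{u,v\}\in\binom{V(G)}{2}$, $G^+=G+e$ and $G^-=G-e$. For $\circ\in\{+,-\}$ let $S^\circ=S(G^\circ)$, $R^\circ=R(G^\circ)$, and $W^\circ=C_u(G^\circ)\cup C_v(G^\circ)$. Then: (i) if $\{u,v\} \cap S^+ = \varnothing$, then $N_{G^-}(W^+) \subseteq N_{G^+}(W^+) \subseteq S^+ \subseteq S^-$, $R^- \subseteq R^+$, and $W^- \subseteq W^+$; (ii) if $\{u,v\} \cap S^+ \neq \varnothing$, then $N_{G^-}(W^-) \subseteq N_{G^+}(W^-) \subseteq S^- \subseteq S^+$, $R^+ \subseteq R^-$, and $W^+ \subseteq W^-$.
   Context: $G+e$ and $G-e$ are the graphs on $V(G)$ with edge sets $E(G)\cup\{e\}$ and $E(G)\setminus\{e\}$. For a graph $H$ and $X\subseteq V(H)$, $N_H(X)=\{x\in V(H)\setminus X: xy\in E(H)\text{ for some }y\in X\}$. The strong $4$-core $S(H)$ is the maximal $X\subseteq V(H)$ with $|N_H(x)\cap X|\ge4$ for all $x\in X\cup N_H(X)$; $P(H)=N_H(S(H))$, $R(H)=V(H)\setminus(S(H)\cup P(H))$. For $x\in P(H)\cup R(H)$, $C_x(H)$ is the vertex set of the component of $H[P(H)\cup R(H)]$ (equivalently of $H-S(H)$) containing $x$; for $x\in S(H)$, $C_x(H)=\varnothing$. *)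

theory Defs
  imports Main
begin

definition graph :: "'a set \<Rightarrow> 'a set set \<Rightarrow> bool" where
  "graph V E \<longleftrightarrow> finite V \<and> (\<forall>e\<in>E. \<exists>x y. x \<noteq> y \<and> x \<in> V \<and> y \<in> V \<and> e = {x, y})"

definition add_edge :: "'a set set \<Rightarrow> 'a set \<Rightarrow> 'a set set" where
  "add_edge E e = E \<union> {e}"

definition del_edge :: "'a set set \<Rightarrow> 'a set \<Rightarrow> 'a set set" where
  "del_edge E e = E - {e}"

definition nbrs :: "'a set set \<Rightarrow> 'a \<Rightarrow> 'a set" where
  "nbrs E x = {y. {x, y} \<in> E}"

definition nbhd :: "'a set \<Rightarrow> 'a set set \<Rightarrow> 'a set \<Rightarrow> 'a set" where
  "nbhd V E X = {x \<in> V - X. \<exists>y\<in>X. {x, y} \<in> E}"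

definition core_prop :: "'a set \<Rightarrow> 'a set set \<Rightarrow> 'a set \<Rightarrow> bool" where
  "core_prop V E X \<longleftrightarrow> X \<subseteq> V \<and>
     (\<forall>x \<in> X \<union> nbhd V E X. card (nbrs E x \<inter> X) \<ge> 4)"

text \<open>The strong 4-core: the maximal (= union of all, since the property is closed
  under unions) set with the core property.\<close>
definition S4 :: "'a set \<Rightarrow> 'a set set \<Rightarrow> 'a set" where
  "S4 V E = \<Union> {X. core_prop V E X}"

definition P4 :: "'a set \<Rightarrow> 'a set set \<Rightarrow> 'a set" where
  "P4 V E = nbhd V E (S4 V E)"

definition R4 :: "'a set \<Rightarrow> 'a set set \<Rightarrow> 'a set" where
  "R4 V E = V - (S4 V E \<union> P4 V E)"

text \<open>C_x(H): vertex set of the component of H - S(H) containing x (empty if x in S(H)).\<close>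
definition comp4 :: "'a set \<Rightarrow> 'a set set \<Rightarrow> 'a \<Rightarrow> 'a set" where
  "comp4 V E x = (let U = V - S4 V E in
     if x \<in> U then {y. (\<lambda>a b. a \<in> U \<and> b \<in> U \<and> {a, b} \<in> E)\<^sup>*\<^sup>* x y} else {})"

end

theory Submission
  imports Defs
begin

text \<open>If the edge uv misses the core S(G+uv), deleting it changes neither the neighbourhood of
  S(G+uv) nor any vertex's degree into it, so S(G+uv) is still a core of G-uv. If uv meets
  S(G+uv), then S(G-uv) \<union> S(G+uv) is a core of G+uv, because a vertex attached to S(G-uv)
  only through uv already lies in S(G+uv) or its neighbourhood. Either way the cores are nested;
  the components off the core then only grow from the graph with the larger core to the other,
  and every neighbour of a component off the core lies in the core.\<close>

lemma S4_subset: "S4 V E \<subseteq> V"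
  unfolding S4_def core_prop_def by blast

lemma S4_greatest: "core_prop V E X \<Longrightarrow> X \<subseteq> S4 V E"
  unfolding S4_def by blast

lemma nbhd_Union_subset: "nbhd V E (\<Union>\<X>) \<subseteq> (\<Union>X\<in>\<X>. nbhd V E X)"
  unfolding nbhd_def by blast

lemma nbhd_mono_edges: "E \<subseteq> E' \<Longrightarrow> nbhd V E X \<subseteq> nbhd V E' X"
  unfolding nbhd_def by blast

lemma Un_nbhd_mono: "X \<subseteq> Y \<Longrightarrow> E \<subseteq> E' \<Longrightarrow> X \<union> nbhd V E X \<subseteq> Y \<union> nbhd V E' Y"
  unfolding nbhd_def by blast

lemma card_nbrs_Int_ge_4:
  assumes "finite V" "core_prop V E X" "X \<subseteq> Y" "Y \<subseteq> V" "x \<in> X \<union> nbhd V E X"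
  shows "4 \<le> card (nbrs E x \<inter> Y)"
proof -
  have "4 \<le> card (nbrs E x \<inter> X)"
    using assms(2,5) unfolding core_prop_def by blast
  also have "\<dots> \<le> card (nbrs E x \<inter> Y)"
    using assms(1,3,4) by (intro card_mono) (auto intro: finite_subset)
  finally show ?thesis .
qed

lemma core_prop_S4:
  assumes "finite V"
  shows "core_prop V E (S4 V E)"
  unfolding core_prop_def
proof (intro conjI ballI)
  show "S4 V E \<subseteq> V" by (rule S4_subset)
  fix x assume "x \<in> S4 V E \<union> nbhd V E (S4 V E)"
  then have "x \<in> (\<Union>X\<in>{X. core_prop V E X}. X \<union> nbhd V E X)"
    using nbhd_Union_subset[of V E "{X. core_prop V E X}"] unfolding S4_def by blast
  then obtain X where X: "core_prop V E X" "x \<in> X \<union> nbhd V E X"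
    by blast
  show "4 \<le> card (nbrs E x \<inter> S4 V E)"
    using card_nbrs_Int_ge_4[OF assms X(1) S4_greatest[OF X(1)] S4_subset X(2)] .
qed

lemma nbrs_insert_edge_Int:
  "{u, v} \<inter> X = {} \<Longrightarrow> nbrs (insert {u, v} E) x \<inter> X = nbrs E x \<inter> X"
  unfolding nbrs_def by (auto simp: doubleton_eq_iff)

lemma nbhd_insert_edge:
  "{u, v} \<inter> X = {} \<Longrightarrow> nbhd V (insert {u, v} E) X = nbhd V E X"
  unfolding nbhd_def by (auto simp: doubleton_eq_iff)

lemma nbhd_insert_edge_subset:
  "nbhd V (insert {u, v} E) X \<subseteq> nbhd V E X \<union> ({u, v} - X)"
  unfolding nbhd_def by (auto simp: doubleton_eq_iff)

lemma core_prop_remove_edge: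
  "core_prop V (insert {u, v} E) X \<Longrightarrow> {u, v} \<inter> X = {} \<Longrightarrow> core_prop V E X"
  unfolding core_prop_def by (simp add: nbrs_insert_edge_Int nbhd_insert_edge)

lemma core_prop_insert_edge_Un:
  assumes fin: "finite V" and X: "core_prop V E X"
    and Y: "core_prop V (insert {u, v} E) Y" and "{u, v} \<inter> Y \<noteq> {}"
  shows "core_prop V (insert {u, v} E) (X \<union> Y)"
  unfolding core_prop_def
proof (intro conjI ballI)
  let ?E' = "insert {u, v} E"
  show XY: "X \<union> Y \<subseteq> V" using X Y unfolding core_prop_def by blast
  fix x assume x: "x \<in> (X \<union> Y) \<union> nbhd V ?E' (X \<union> Y)"
  show "4 \<le> card (nbrs ?E' x \<inter> (X \<union> Y))"
  proof (cases "x \<in> Y \<union> nbhd V ?E' Y")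
    case True
    then show ?thesis using fin Y XY by (blast intro: card_nbrs_Int_ge_4)
  next
    case False
    have "x \<in> X \<union> nbhd V E X"
    proof (rule ccontr)
      assume "x \<notin> X \<union> nbhd V E X"
      with x False obtain z
        where "x \<notin> Y" "z \<notin> Y" "{x, z} \<in> ?E'" "{x, z} \<notin> E"
        unfolding nbhd_def by blast
      then show False using \<open>{u, v} \<inter> Y \<noteq> {}\<close> by (auto simp: doubleton_eq_iff)
    qed
    then have "4 \<le> card (nbrs E x \<inter> (X \<union> Y))"
      using fin X XY by (blast intro: card_nbrs_Int_ge_4)
    also have "\<dots> \<le> card (nbrs ?E' x \<inter> (X \<union> Y))"
      using fin XY by (intro card_mono) (auto simp: nbrs_def intro: finite_subset)
    finally show ?thesis .
  qed
qed

lemma S4_insert_edge_subset: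
  assumes "finite V" "{u, v} \<inter> S4 V (insert {u, v} E) = {}"
  shows "S4 V (insert {u, v} E) \<subseteq> S4 V E"
  using S4_greatest[OF core_prop_remove_edge[OF core_prop_S4[OF assms(1)] assms(2)]] .

lemma S4_subset_S4_insert_edge:
  assumes "finite V" "{u, v} \<inter> S4 V (insert {u, v} E) \<noteq> {}"
  shows "S4 V E \<subseteq> S4 V (insert {u, v} E)"
  using S4_greatest[OF core_prop_insert_edge_Un[OF assms(1) core_prop_S4 core_prop_S4 assms(2)]]
    assms(1) by blast

lemma R4_subset_R4_insert_edge:
  assumes "finite V" "{u, v} \<inter> S4 V (insert {u, v} E) = {}"
  shows "R4 V E \<subseteq> R4 V (insert {u, v} E)"
proof -
  let ?S' = "S4 V (insert {u, v} E)"
  have "?S' \<union> nbhd V (insert {u, v} E) ?S' = ?S' \<union> nbhd V E ?S'"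
    using assms(2) by (simp add: nbhd_insert_edge)
  also have "\<dots> \<subseteq> S4 V E \<union> nbhd V E (S4 V E)"
    using S4_insert_edge_subset[OF assms] by (rule Un_nbhd_mono) simp
  finally show ?thesis unfolding R4_def P4_def by blast
qed

lemma R4_insert_edge_subset:
  assumes "finite V" "{u, v} \<inter> S4 V (insert {u, v} E) \<noteq> {}"
  shows "R4 V (insert {u, v} E) \<subseteq> R4 V E"
  using Un_nbhd_mono[OF S4_subset_S4_insert_edge[OF assms] subset_insertI]
  unfolding R4_def P4_def by blast

definition off_core_adj :: "'a set \<Rightarrow> 'a set set \<Rightarrow> 'a \<Rightarrow> 'a \<Rightarrow> bool" where
  "off_core_adj V E a b \<longleftrightarrow> a \<in> V - S4 V E \<and> b \<in> V - S4 V E \<and> {a, b} \<in> E"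

lemma comp4_eq:
  "comp4 V E w = (if w \<in> V - S4 V E then {y. (off_core_adj V E)\<^sup>*\<^sup>* w y} else {})"
  unfolding comp4_def off_core_adj_def Let_def by simp

lemma comp4_subset: "comp4 V E w \<subseteq> V - S4 V E"
proof
  fix y assume "y \<in> comp4 V E w"
  then have "(off_core_adj V E)\<^sup>*\<^sup>* w y" "w \<in> V - S4 V E"
    by (auto simp: comp4_eq split: if_splits)
  then show "y \<in> V - S4 V E"
    by (induction rule: rtranclp_induct) (auto simp: off_core_adj_def)
qed

lemma self_mem_comp4: "w \<in> V \<Longrightarrow> w \<notin> S4 V E \<Longrightarrow> w \<in> comp4 V E w"
  by (simp add: comp4_eq)

lemma comp4_edge_closed:
  assumes "y \<in> comp4 V E w" "{x, y} \<in> E" "x \<in> V - S4 V E"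
  shows "x \<in> comp4 V E w"
proof -
  have "w \<in> V - S4 V E" "(off_core_adj V E)\<^sup>*\<^sup>* w y"
    using assms(1) by (auto simp: comp4_eq split: if_splits)
  moreover have "off_core_adj V E y x"
    using subsetD[OF comp4_subset assms(1)] assms(2,3)
    unfolding off_core_adj_def by (simp add: insert_commute)
  ultimately show ?thesis by (simp add: comp4_eq)
qed

lemma nbhd_UN_comp4_subset: "nbhd V E (\<Union>w\<in>A. comp4 V E w) \<subseteq> S4 V E"
proof
  fix x assume "x \<in> nbhd V E (\<Union>w\<in>A. comp4 V E w)"
  then obtain w y where "x \<in> V" "x \<notin> comp4 V E w" "y \<in> comp4 V E w" "{x, y} \<in> E"
    unfolding nbhd_def by blast
  then show "x \<in> S4 V E" using comp4_edge_closed[of y V E w x] by blast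
qed

lemma nbhd_insert_edge_UN_comp4_subset:
  assumes "u \<in> A \<inter> V" "v \<in> A \<inter> V"
  shows "nbhd V (insert {u, v} E) (\<Union>w\<in>A. comp4 V E w) \<subseteq> S4 V E"
proof
  let ?W = "\<Union>w\<in>A. comp4 V E w"
  fix x assume "x \<in> nbhd V (insert {u, v} E) ?W"
  then have "x \<in> nbhd V E ?W \<union> ({u, v} - ?W)"
    by (rule subsetD[OF nbhd_insert_edge_subset])
  then consider "x \<in> nbhd V E ?W" | "x \<in> {u, v}" "x \<notin> ?W"
    by blast
  then show "x \<in> S4 V E"
  proof cases
    case 1
    then show ?thesis using nbhd_UN_comp4_subset ..
  next
    case 2
    then show ?thesis using assms self_mem_comp4[of x V E] by auto
  qed
qed

lemma comp4_mono:
  assumes "S4 V E' \<subseteq> S4 V E" "off_core_adj V E \<le> off_core_adj V E'"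
  shows "comp4 V E w \<subseteq> comp4 V E' w"
proof
  fix y assume "y \<in> comp4 V E w"
  then have w: "w \<in> V - S4 V E" and path: "(off_core_adj V E)\<^sup>*\<^sup>* w y"
    by (auto simp: comp4_eq split: if_splits)
  have "(off_core_adj V E')\<^sup>*\<^sup>* w y"
    using predicate2D[OF rtranclp_mono[OF assms(2)] path] .
  moreover have "w \<in> V - S4 V E'"
    using w assms(1) by blast
  ultimately show "y \<in> comp4 V E' w"
    by (simp add: comp4_eq)
qed

lemma comp4_subset_comp4_insert_edge:
  assumes "finite V" "{u, v} \<inter> S4 V (insert {u, v} E) = {}"
  shows "comp4 V E w \<subseteq> comp4 V (insert {u, v} E) w"
proof (rule comp4_mono)
  show S: "S4 V (insert {u, v} E) \<subseteq> S4 V E"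
    using assms by (rule S4_insert_edge_subset)
  show "off_core_adj V E \<le> off_core_adj V (insert {u, v} E)"
  proof (rule predicate2I)
    fix a b assume "off_core_adj V E a b"
    then show "off_core_adj V (insert {u, v} E) a b"
      using S unfolding off_core_adj_def by blast
  qed
qed

lemma comp4_insert_edge_subset:
  assumes "finite V" "{u, v} \<inter> S4 V (insert {u, v} E) \<noteq> {}"
  shows "comp4 V (insert {u, v} E) w \<subseteq> comp4 V E w"
proof (rule comp4_mono)
  show S: "S4 V E \<subseteq> S4 V (insert {u, v} E)"
    using assms by (rule S4_subset_S4_insert_edge)
  show "off_core_adj V (insert {u, v} E) \<le> off_core_adj V E"
  proof (rule predicate2I)
    fix a b assume ab: "off_core_adj V (insert {u, v} E) a b"
    then have "{a, b} \<noteq> {u, v}"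
      using assms(2) unfolding off_core_adj_def by (auto simp: doubleton_eq_iff)
    with ab S show "off_core_adj V E a b"
      unfolding off_core_adj_def by blast
  qed
qed

theorem lemma4p9:
  fixes V :: "'a set" and E :: "'a set set" and u v :: 'a
  assumes "graph V E" and "u \<in> V" and "v \<in> V" and "u \<noteq> v"
  defines "Ep \<equiv> add_edge E {u, v}" and "Em \<equiv> del_edge E {u, v}"
  defines "Sp \<equiv> S4 V Ep" and "Sm \<equiv> S4 V Em"
      and "Rp \<equiv> R4 V Ep" and "Rm \<equiv> R4 V Em"
      and "Wp \<equiv> comp4 V Ep u \<union> comp4 V Ep v"
      and "Wm \<equiv> comp4 V Em u \<union> comp4 V Em v"
  shows "({u, v} \<inter> Sp = {} \<longrightarrow>
            nbhd V Em Wp \<subseteq> nbhd V Ep Wp \<and> nbhd V Ep Wp \<subseteq> Sp \<and> Sp \<subseteq> Sm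
            \<and> Rm \<subseteq> Rp \<and> Wm \<subseteq> Wp)
       \<and> ({u, v} \<inter> Sp \<noteq> {} \<longrightarrow>
            nbhd V Em Wm \<subseteq> nbhd V Ep Wm \<and> nbhd V Ep Wm \<subseteq> Sm \<and> Sm \<subseteq> Sp
            \<and> Rp \<subseteq> Rm \<and> Wp \<subseteq> Wm)"
proof -
  have fin: "finite V" using assms(1) by (simp add: graph_def)
  have Ep: "Ep = insert {u, v} Em"
    unfolding Ep_def Em_def add_edge_def del_edge_def by blast
  have W: "Wp = (\<Union>w\<in>{u, v}. comp4 V Ep w)" "Wm = (\<Union>w\<in>{u, v}. comp4 V Em w)"
    by (simp_all add: Wp_def Wm_def)
  have "nbhd V Em Wp \<subseteq> nbhd V Ep Wp" "nbhd V Em Wm \<subseteq> nbhd V Ep Wm"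
    unfolding Ep by (simp_all add: nbhd_mono_edges subset_insertI)
  moreover have "nbhd V Ep Wp \<subseteq> Sp"
    unfolding W Sp_def by (rule nbhd_UN_comp4_subset)
  moreover have "nbhd V Ep Wm \<subseteq> Sm"
    unfolding W Sm_def Ep using assms(2,3) by (intro nbhd_insert_edge_UN_comp4_subset) simp_all
  moreover have "Sp \<subseteq> Sm \<and> Rm \<subseteq> Rp \<and> Wm \<subseteq> Wp" if "{u, v} \<inter> Sp = {}"
    using S4_insert_edge_subset[OF fin that[unfolded Sp_def Ep]]
      R4_subset_R4_insert_edge[OF fin that[unfolded Sp_def Ep]]
      comp4_subset_comp4_insert_edge[OF fin that[unfolded Sp_def Ep]]
    unfolding Sp_def Sm_def Rp_def Rm_def Wp_def Wm_def Ep by blast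
  moreover have "Sm \<subseteq> Sp \<and> Rp \<subseteq> Rm \<and> Wp \<subseteq> Wm" if "{u, v} \<inter> Sp \<noteq> {}"
    using S4_subset_S4_insert_edge[OF fin that[unfolded Sp_def Ep]]
      R4_insert_edge_subset[OF fin that[unfolded Sp_def Ep]]
      comp4_insert_edge_subset[OF fin that[unfolded Sp_def Ep]]
    unfolding Sp_def Sm_def Rp_def Rm_def Wp_def Wm_def Ep by blast
  ultimately show ?thesis by blast
qed

end
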